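(* Let $\mathsf{x}\in\mathbb{R}^m$ be a random vector and let $n\in\mathbb{N}$ with $n\le m$ and $n>K(\mathsf{x})$. Then there exists a Borel measurable mapping $g\colon\mathbb{R}^{n\times m}\times\mathbb{R}^n\to\mathbb{R}^m$ such that $$\mathbb{P}[g(\mathbf{A},\mathbf{A}\mathsf{x})\neq\mathsf{x}]=0\quad\text{for }\lambda^{n\times m}\text{-almost all }\mathbf{A}\in\mathbb{R}^{n\times m}.$$
   Context: For nonempty $\mathcal{U}\subseteq\mathbb{R}^m$ and $\rho>0$, $N_{\mathcal U}(\rho)$ denotes the smallest number of open Euclidean balls of radius $\rho$ covering $\mathcal U$ ($=\infty$ if no finite cover exists). The lower and upper Minkowski dimensions are $\underline{\dim}_{\mathrm B}(\mathcal U)=\liminf_{\rho\to0}\frac{\log N_{\mathcal U}(\rho)}{\log(1/\rho)}$ and $\overline{\dim}_{\mathrm B}(\mathcal U)=\limsup_{\rho\to0}\frac{\log N_{\mathcal U}(\rho)}{\log(1/\rho)}$. The lower modified Minkowski dimension is $\underline{\dim}_{\mathrm{MB}}(\mathcal U)=\inf\{\sup_{i\in\mathbb N}\underline{\dim}_{\mathrm B}(\mathcal U_i):\mathcal U\subseteq\bigcup_{i\in\mathbb N}\mathcal U_i\}$, the infimum taken over all countable covers of $\mathcal U$ by nonempty bounded sets $\mathcal U_i$; the upper modified Minkowski dimension $\overline{\dim}_{\mathrm{MB}}$ is defined the same way with $\overline{\dim}_{\mathrm B}$. A support set of a random vector $\mathsf x\in\mathbb R^m$ is any set $\mathcal U\subseteq\mathbb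 R^m$ with $\mathbb P[\mathsf x\in\mathcal U]=1$. The description complexity of $\mathsf x$ is $K(\mathsf x)=\inf\{\underline{\dim}_{\mathrm{MB}}(\mathcal U):\mathcal U\text{ a support set of }\mathsf x\}$. $\lambda^{n\times m}$ is Lebesgue measure on $\mathbb R^{n\times m}$. *)

theory Defs
  imports "HOL-Probability.Probability"
begin

definition covering_number :: "'a::metric_space set \<Rightarrow> real \<Rightarrow> ereal" where
  "covering_number U \<rho> =
     (if \<exists>C. finite C \<and> U \<subseteq> (\<Union>c\<in>C. ball c \<rho>)
      then ereal (real (LEAST k. \<exists>C. finite C \<and> card C = k \<and> U \<subseteq> (\<Union>c\<in>C. ball c \<rho>)))
      else \<infinity>)"

definition box_ratio :: "'a::metric_space set \<Rightarrow> real \<Rightarrow> ereal" where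
  "box_ratio U \<rho> =
     (if covering_number U \<rho> = \<infinity> then \<infinity>
      else ereal (ln (real_of_ereal (covering_number U \<rho>)) / ln (1 / \<rho>)))"

definition lower_box_dim :: "'a::metric_space set \<Rightarrow> ereal" where
  "lower_box_dim U = Liminf (at_right 0) (box_ratio U)"

definition upper_box_dim :: "'a::metric_space set \<Rightarrow> ereal" where
  "upper_box_dim U = Limsup (at_right 0) (box_ratio U)"

definition lower_mod_box_dim :: "'a::metric_space set \<Rightarrow> ereal" where
  "lower_mod_box_dim U =
     (INF Ui \<in> {Ui :: nat \<Rightarrow> 'a set. (\<forall>i. Ui i \<noteq> {} \<and> bounded (Ui i)) \<and> U \<subseteq> (\<Union>i. Ui i)}.
        (SUP i. lower_box_dim (Ui i)))"

definition upper_mod_box_dim :: "'a::metric_space set \<Rightarrow> ereal" where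
  "upper_mod_box_dim U =
     (INF Ui \<in> {Ui :: nat \<Rightarrow> 'a set. (\<forall>i. Ui i \<noteq> {} \<and> bounded (Ui i)) \<and> U \<subseteq> (\<Union>i. Ui i)}.
        (SUP i. upper_box_dim (Ui i)))"

definition support_set :: "'w measure \<Rightarrow> ('w \<Rightarrow> 'a) \<Rightarrow> 'a set \<Rightarrow> bool" where
  "support_set M X U \<longleftrightarrow>
     {\<omega> \<in> space M. X \<omega> \<in> U} \<in> sets M \<and> measure M {\<omega> \<in> space M. X \<omega> \<in> U} = 1"

definition description_complexity :: "'w measure \<Rightarrow> ('w \<Rightarrow> 'a::metric_space) \<Rightarrow> ereal" where
  "description_complexity M X = (INF U \<in> {U. support_set M X U}. lower_mod_box_dim U)"

end

theory Submission
  imports Defs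
begin

text \<open>If \<open>lower_box_dim W < s < n\<close>, then for arbitrarily small \<open>\<rho>\<close> the set \<open>W\<close> is covered by at
  most \<open>\<rho>^-s\<close> balls of radius \<open>\<rho>\<close>. A matrix \<open>A\<close> with bounded entries that identifies \<open>x\<close>
  with a point of \<open>closure W\<close> at distance \<open>\<ge> r\<close> from \<open>x\<close> has all its rows almost orthogonal to
  \<open>c - x\<close> for the centre \<open>c\<close> of one of these balls; such matrices form a set of measure
  \<open>O(\<rho>^n)\<close>, so all of them together have measure \<open>O(\<rho>^(n-s)) \<rightarrow> 0\<close>. Covering the support of
  the random vector by countably many such \<open>W\<close>, almost every \<open>A\<close> is injective at every fixed
  point on the union of the compact sets \<open>closure W\<close>, hence by Fubini at almost every sample.
  On these compact sets the preimage of \<open>A x\<close> is recovered as the limit of points of a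
  countable dense set whose images converge to \<open>A x\<close>, which gives a Borel decoder.\<close>

lemma Liminf_at_right_lessE:
  fixes f :: "real \<Rightarrow> ereal"
  assumes "Liminf (at_right 0) f < c" "e > 0"
  obtains \<rho> where "0 < \<rho>" "\<rho> < e" "f \<rho> < c"
proof (rule ccontr)
  assume "\<not> thesis"
  with that have "\<forall>\<rho>. 0 < \<rho> \<and> \<rho> < e \<longrightarrow> c \<le> f \<rho>" by (metis not_less)
  hence "eventually (\<lambda>\<rho>. c \<le> f \<rho>) (at_right 0)"
    unfolding eventually_at_right_field using assms(2) by blast
  hence "c \<le> Liminf (at_right 0) f" by (rule Liminf_bounded)
  with assms show False by simp
qed

lemma small_cover_of_box_ratio_less:
  fixes W :: "'a::metric_space set"
  assumes "box_ratio W \<rho> < ereal s" "0 < \<rho>" "\<rho> < 1"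
  shows "\<exists>C. finite C \<and> W \<subseteq> (\<Union>c\<in>C. ball c \<rho>) \<and> real (card C) \<le> \<rho> powr (-s)"
proof -
  have ex: "\<exists>C. finite C \<and> W \<subseteq> (\<Union>c\<in>C. ball c \<rho>)"
    using assms(1) by (auto simp: box_ratio_def covering_number_def split: if_splits)
  define N where "N = (LEAST k. \<exists>C. finite C \<and> card C = k \<and> W \<subseteq> (\<Union>c\<in>C. ball c \<rho>))"
  have "\<exists>C. finite C \<and> card C = N \<and> W \<subseteq> (\<Union>c\<in>C. ball c \<rho>)"
    unfolding N_def by (rule LeastI_ex) (use ex in blast)
  then obtain C where C: "finite C" "card C = N" "W \<subseteq> (\<Union>c\<in>C. ball c \<rho>)" by blast
  have "covering_number W \<rho> = ereal (real N)"
    using ex unfolding covering_number_def N_def by simp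
  with assms(1) have "ln (real N) / ln (1/\<rho>) < s"
    by (simp add: box_ratio_def)
  hence lt: "ln (real N) < s * ln (1/\<rho>)"
    using assms(2,3) by (simp add: divide_less_eq)
  have "real N \<le> \<rho> powr (-s)"
  proof (cases "N = 0")
    case False
    hence "real N = exp (ln (real N))" by simp
    also have "\<dots> \<le> exp (s * ln (1/\<rho>))" using lt by simp
    also have "\<dots> = \<rho> powr (-s)" using assms(2) by (simp add: powr_def ln_div)
    finally show ?thesis .
  qed simp
  with C show ?thesis by blast
qed

lemma small_cover_of_lower_box_dim_less:
  fixes W :: "'a::metric_space set"
  assumes "lower_box_dim W < ereal s" "e > 0"
  shows "\<exists>\<rho> C. 0 < \<rho> \<and> \<rho> < e \<and> finite C \<and> W \<subseteq> (\<Union>c\<in>C. ball c \<rho>) \<and>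
           real (card C) \<le> \<rho> powr (-s)"
proof -
  obtain \<rho> where \<rho>: "0 < \<rho>" "\<rho> < min e 1" "box_ratio W \<rho> < ereal s"
    using Liminf_at_right_lessE[of "box_ratio W" "ereal s" "min e 1"] assms
    by (auto simp: lower_box_dim_def)
  then show ?thesis using small_cover_of_box_ratio_less[OF \<rho>(3,1)] by force
qed

lemma description_complexity_lessE:
  fixes X :: "'w \<Rightarrow> 'a::metric_space"
  assumes "prob_space M" "description_complexity M X < c"
  obtains W :: "nat \<Rightarrow> 'a set"
  where "\<And>i. W i \<noteq> {}" "\<And>i. bounded (W i)" "\<And>i. lower_box_dim (W i) < c"
    and "AE \<omega> in M. X \<omega> \<in> (\<Union>i. W i)"
proof -
  obtain U where U: "support_set M X U" "lower_mod_box_dim U < c"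
    using assms(2) unfolding description_complexity_def INF_less_iff by blast
  then obtain W :: "nat \<Rightarrow> 'a set" where W: "\<forall>i. W i \<noteq> {} \<and> bounded (W i)" "U \<subseteq> (\<Union>i. W i)"
      "(SUP i. lower_box_dim (W i)) < c"
    unfolding lower_mod_box_dim_def INF_less_iff by blast
  have "AE \<omega> in M. \<omega> \<in> {\<omega> \<in> space M. X \<omega> \<in> U}"
    using U(1) by (intro prob_space.AE_prob_1[OF assms(1)]) (simp add: support_set_def)
  then have "AE \<omega> in M. X \<omega> \<in> (\<Union>i. W i)"
    using W(2) by (auto elim!: eventually_mono)
  moreover have "lower_box_dim (W i) < c" for i
    using W(3) by (meson SUP_upper UNIV_I le_less_trans)
  ultimately show thesis using that W(1) by blast
qed

lemma Basis_vec_eq_image: "(Basis :: ('a::euclidean_space^'n) set) = (\<lambda>(i,c). axis i c) ` (UNIV \<times> Basis)"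
  unfolding Basis_vec_def by auto

lemma prod_Basis_vec:
  "(\<Prod>b\<in>(Basis :: ('a::euclidean_space^'n) set). f b) = (\<Prod>i\<in>UNIV. \<Prod>c\<in>Basis. f (axis i c))"
proof -
  have inj: "inj_on (\<lambda>(i,c). axis i (c::'a)) (UNIV \<times> Basis)"
    by (auto simp: inj_on_def axis_eq_axis nonzero_Basis)
  show ?thesis
    unfolding Basis_vec_eq_image prod.reindex[OF inj]
    by (simp add: prod.cartesian_product split_def)
qed

lemma mem_box_vec: "(x::'a::euclidean_space^'n) \<in> box l u \<longleftrightarrow> (\<forall>i. x$i \<in> box (l$i) (u$i))"
  unfolding mem_box Basis_vec_def by (auto simp: inner_axis)

lemma measurable_vec_lambda:
  "vec_lambda \<in> (\<Pi>\<^sub>M i\<in>UNIV. (lborel :: 'a::euclidean_space measure)) \<rightarrow>\<^sub>M (borel :: ('a^'n) measure)"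
proof (subst borel_measurable_euclidean_space, intro ballI)
  fix b :: "'a^'n" assume "b \<in> Basis"
  then obtain i c where b: "b = axis i c" "c \<in> Basis" unfolding Basis_vec_def by auto
  have "(\<lambda>f. f i \<bullet> c) \<in> borel_measurable (\<Pi>\<^sub>M i\<in>UNIV. (lborel :: 'a measure))"
    by measurable
  then show "(\<lambda>x. vec_lambda x \<bullet> b) \<in> borel_measurable (\<Pi>\<^sub>M i\<in>UNIV. (lborel :: 'a measure))"
    by (simp add: b inner_axis)
qed

lemma lborel_vec_eq_distr_PiM:
  "(lborel :: ('a::euclidean_space^'n) measure) = distr (\<Pi>\<^sub>M i\<in>UNIV. lborel) borel vec_lambda"
proof (rule lborel_eqI)
  interpret product_sigma_finite "\<lambda>_::'n. lborel :: 'a measure" by standard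
  fix l u :: "'a^'n" assume le: "\<And>b. b\<in>Basis \<Longrightarrow> l\<bullet>b \<le> u\<bullet>b"
  have le2: "\<And>i c. c \<in> Basis \<Longrightarrow> l$i \<bullet> c \<le> u$i \<bullet> c"
    using le by (metis axis_in_Basis_iff inner_axis)
  have pre: "vec_lambda -` box l u \<inter> space (\<Pi>\<^sub>M i\<in>UNIV. (lborel :: 'a measure)) =
      (\<Pi>\<^sub>E i\<in>UNIV. box (l$i) (u$i))"
    by (auto simp: space_PiM mem_box_vec PiE_iff)
  have "emeasure (distr (\<Pi>\<^sub>M i\<in>UNIV. lborel) borel vec_lambda) (box l u)
      = emeasure (\<Pi>\<^sub>M i\<in>UNIV. (lborel :: 'a measure)) (\<Pi>\<^sub>E i\<in>UNIV. box (l$i) (u$i))"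
    by (subst emeasure_distr[OF measurable_vec_lambda]) (simp_all add: pre)
  also have "\<dots> = (\<Prod>i\<in>UNIV. emeasure lborel (box (l$i) (u$i)))"
    by (rule emeasure_PiM) auto
  also have "\<dots> = (\<Prod>i\<in>UNIV. ennreal (\<Prod>c\<in>Basis. (u$i - l$i) \<bullet> c))"
    using le2 by (simp add: emeasure_lborel_box_eq inner_diff_left)
  also have "\<dots> = ennreal (\<Prod>i\<in>UNIV. (\<Prod>c\<in>Basis. (u$i - l$i) \<bullet> c))"
    by (rule prod_ennreal) (use le2 in \<open>auto intro!: prod_nonneg simp: inner_diff_left\<close>)
  also have "(\<Prod>i\<in>UNIV. (\<Prod>c\<in>Basis. (u$i - l$i) \<bullet> c)) = (\<Prod>b\<in>Basis. (u - l) \<bullet> b)"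
    by (simp add: prod_Basis_vec inner_axis)
  finally show "emeasure (distr (\<Pi>\<^sub>M i\<in>UNIV. lborel) borel vec_lambda) (box l u) =
      (\<Prod>b\<in>Basis. (u - l) \<bullet> b)" .
qed simp

lemma emeasure_lborel_vec:
  assumes "S \<in> sets borel"
  shows "emeasure lborel (S :: ('a::euclidean_space^'n) set) =
           emeasure (\<Pi>\<^sub>M i\<in>UNIV. lborel) {f. vec_lambda f \<in> S}"
proof -
  have "emeasure lborel S = emeasure (\<Pi>\<^sub>M i\<in>UNIV. lborel)
      (vec_lambda -` S \<inter> space (\<Pi>\<^sub>M i\<in>UNIV. (lborel :: 'a measure)))"
    unfolding lborel_vec_eq_distr_PiM[where 'a='a and 'n='n]
    using assms by (intro emeasure_distr measurable_vec_lambda)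
  then show ?thesis by (simp add: space_PiM vimage_def)
qed

definition slab :: "real \<Rightarrow> real^'m \<Rightarrow> real \<Rightarrow> (real^'m) set" where
  "slab R v \<delta> = {a. (\<forall>j. \<bar>a$j\<bar> \<le> R) \<and> \<bar>a \<bullet> v\<bar> \<le> \<delta>}"

definition matrix_slab :: "real \<Rightarrow> real^'m \<Rightarrow> real \<Rightarrow> (real^'m^'n) set" where
  "matrix_slab R v \<delta> = {A. \<forall>i. A$i \<in> slab R v \<delta>}"

lemma measurable_vec_nth [measurable]: "(\<lambda>x::'a::real_normed_vector^'n. x$i) \<in> borel_measurable borel"
  by (intro borel_measurable_continuous_onI linear_continuous_on bounded_linear_vec_nth)

lemma slab_borel [measurable]: "slab R v \<delta> \<in> sets borel"
  unfolding slab_def by measurable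

lemma matrix_slab_borel [measurable]: "matrix_slab R v \<delta> \<in> sets borel"
  unfolding matrix_slab_def slab_def by measurable

lemma nn_integral_slab_fibre_le:
  fixes v :: "real^'m" and x :: "'m \<Rightarrow> real"
  assumes vk: "v$k \<noteq> 0" and \<delta>: "\<delta> \<ge> 0" and x: "x \<in> extensional (- {k})"
  shows "(\<integral>\<^sup>+ y. indicator {f. vec_lambda f \<in> slab R v \<delta>} (x(k := y)) \<partial>lborel)
           \<le> ennreal (2*\<delta>/\<bar>v$k\<bar>) * indicator (\<Pi>\<^sub>E j\<in>- {k}. {-R..R}) x"
proof -
  define c where "c = (\<Sum>j\<in>- {k}. x j * v$j)"
  define a where "a = - c / v$k - \<delta>/\<bar>v$k\<bar>"
  define b where "b = - c / v$k + \<delta>/\<bar>v$k\<bar>"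
  have inner: "vec_lambda (x(k := y)) \<bullet> v = y * v$k + c" for y
  proof -
    have UNIV_eq: "(UNIV::'m set) = insert k (- {k})" by auto
    have "vec_lambda (x(k := y)) \<bullet> v = (\<Sum>j\<in>insert k (- {k}). (x(k := y)) j * v$j)"
      unfolding inner_vec_def UNIV_eq[symmetric] by simp
    also have "\<dots> = y * v$k + (\<Sum>j\<in>- {k}. (x(k := y)) j * v$j)"
      by (subst sum.insert) auto
    also have "(\<Sum>j\<in>- {k}. (x(k := y)) j * v$j) = c"
      unfolding c_def by (intro sum.cong) auto
    finally show ?thesis .
  qed
  have "(indicator {f. vec_lambda f \<in> slab R v \<delta>} (x(k := y)) :: ennreal) \<le>
      indicator (\<Pi>\<^sub>E j\<in>- {k}. {-R..R}) x * indicator {a..b} y" for y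
  proof (cases "vec_lambda (x(k := y)) \<in> slab R v \<delta>")
    case True
    then have "x \<in> (\<Pi>\<^sub>E j\<in>- {k}. {-R..R})"
      using x by (auto simp: slab_def PiE_iff abs_le_iff split: if_splits)
    moreover from True have "\<bar>y + c / v$k\<bar> * \<bar>v$k\<bar> \<le> \<delta>"
      using vk by (simp add: slab_def inner abs_mult[symmetric] distrib_right)
    then have "\<bar>y + c / v$k\<bar> \<le> \<delta> / \<bar>v$k\<bar>"
      using vk by (simp add: pos_le_divide_eq)
    then have "y \<in> {a..b}"
      by (auto simp: a_def b_def abs_le_iff)
    ultimately show ?thesis using True by simp
  qed simp
  then have "(\<integral>\<^sup>+ y. indicator {f. vec_lambda f \<in> slab R v \<delta>} (x(k := y)) \<partial>lborel) \<le>
      (\<integral>\<^sup>+ y. indicator (\<Pi>\<^sub>E j\<in>- {k}. {-R..R}) x * indicator {a..b} y \<partial>lborel)"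
    by (intro nn_integral_mono)
  also have "\<dots> = indicator (\<Pi>\<^sub>E j\<in>- {k}. {-R..R}) x * ennreal (2*\<delta>/\<bar>v$k\<bar>)"
    using \<delta> by (subst nn_integral_cmult_indicator) (auto simp: a_def b_def)
  finally show ?thesis by (simp add: mult.commute)
qed

lemma emeasure_slab_le:
  fixes v :: "real^'m"
  assumes vk: "v$k \<noteq> 0" and R: "R \<ge> 0" and \<delta>: "\<delta> \<ge> 0"
  shows "emeasure lborel (slab R v \<delta>) \<le> ennreal ((2*R)^(CARD('m)-1) * (2*\<delta>/\<bar>v$k\<bar>))"
proof -
  interpret product_sigma_finite "\<lambda>_::'m. lborel :: real measure" by standard
  let ?S = "{f. vec_lambda f \<in> slab R v \<delta>}"
  have UNIV_eq: "(UNIV::'m set) = insert k (- {k})" by auto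
  have "?S = vec_lambda -` slab R v \<delta> \<inter> space (\<Pi>\<^sub>M i\<in>UNIV. lborel)"
    by (simp add: space_PiM vimage_def)
  also have "\<dots> \<in> sets (\<Pi>\<^sub>M i\<in>UNIV. lborel)"
    by (rule measurable_sets[OF measurable_vec_lambda slab_borel])
  finally have S: "?S \<in> sets (\<Pi>\<^sub>M i\<in>UNIV. lborel)" .
  have "emeasure lborel (slab R v \<delta>) = (\<integral>\<^sup>+ f. indicator ?S f \<partial>(\<Pi>\<^sub>M i\<in>UNIV. lborel))"
    using S by (simp add: emeasure_lborel_vec)
  also have "\<dots> = (\<integral>\<^sup>+ x. (\<integral>\<^sup>+ y. indicator ?S (x(k := y)) \<partial>lborel) \<partial>(\<Pi>\<^sub>M i\<in>- {k}. lborel))"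
    using S unfolding UNIV_eq by (intro product_nn_integral_insert) auto
  also have "\<dots> \<le> (\<integral>\<^sup>+ x. ennreal (2*\<delta>/\<bar>v$k\<bar>) * indicator (\<Pi>\<^sub>E j\<in>- {k}. {-R..R}) x
      \<partial>(\<Pi>\<^sub>M i\<in>- {k}. lborel))"
    using nn_integral_slab_fibre_le[OF vk \<delta>]
    by (intro nn_integral_mono) (auto simp: space_PiM PiE_def)
  also have "\<dots> = ennreal (2*\<delta>/\<bar>v$k\<bar>) * (\<Prod>j\<in>- {k}. emeasure lborel {-R..R})"
    by (simp add: nn_integral_cmult_indicator sets_PiM_I_finite emeasure_PiM)
  also have "(\<Prod>j\<in>- {k}. emeasure lborel {-R..R}) = ennreal ((2*R)^(CARD('m)-1))"
    using R by (simp add: Compl_eq_Diff_UNIV card_Diff_singleton ennreal_power)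
  also have "ennreal (2*\<delta>/\<bar>v$k\<bar>) * \<dots> = ennreal ((2*R)^(CARD('m)-1) * (2*\<delta>/\<bar>v$k\<bar>))"
    using R \<delta> by (subst ennreal_mult) (auto simp: mult.commute)
  finally show ?thesis .
qed

lemma emeasure_matrix_slab_le:
  fixes v :: "real^'m"
  assumes "v$k \<noteq> 0" "R \<ge> 0" "\<delta> \<ge> 0"
  shows "emeasure lborel (matrix_slab R v \<delta> :: (real^'m^'n) set)
           \<le> ennreal (((2*R)^(CARD('m)-1) * (2*\<delta>/\<bar>v$k\<bar>))^CARD('n))"
proof -
  interpret product_sigma_finite "\<lambda>_::'n. lborel :: (real^'m) measure" by standard
  have "{f. vec_lambda f \<in> (matrix_slab R v \<delta> :: (real^'m^'n) set)} = (\<Pi>\<^sub>E i\<in>UNIV. slab R v \<delta>)"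
    by (auto simp: matrix_slab_def)
  then have "emeasure lborel (matrix_slab R v \<delta> :: (real^'m^'n) set) =
      (\<Prod>i\<in>(UNIV::'n set). emeasure lborel (slab R v \<delta>))"
    by (simp add: emeasure_lborel_vec emeasure_PiM)
  also have "\<dots> \<le> (\<Prod>i\<in>(UNIV::'n set). ennreal ((2*R)^(CARD('m)-1) * (2*\<delta>/\<bar>v$k\<bar>)))"
    by (intro prod_mono_ennreal emeasure_slab_le assms)
  finally show ?thesis
    using assms(2,3) by (simp add: ennreal_power)
qed

lemma exists_norm_le_card_mult_abs_nth: "\<exists>k. norm (v::real^'m) \<le> real CARD('m) * \<bar>v$k\<bar>"
proof -
  have "Max (range (\<lambda>j. \<bar>v$j\<bar>)) \<in> range (\<lambda>j. \<bar>v$j\<bar>)" by (intro Max_in) auto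
  then obtain k where k_max: "Max (range (\<lambda>j. \<bar>v$j\<bar>)) = \<bar>v$k\<bar>" by (metis rangeE)
  have k: "\<forall>j. \<bar>v$j\<bar> \<le> \<bar>v$k\<bar>" unfolding k_max[symmetric] by (intro allI Max_ge) auto
  have "norm v \<le> (\<Sum>j\<in>UNIV. \<bar>v$j\<bar>)" by (rule norm_le_l1_cart)
  also have "\<dots> \<le> real CARD('m) * \<bar>v$k\<bar>"
    using sum_bounded_above[of UNIV "\<lambda>j. \<bar>v$j\<bar>" "\<bar>v$k\<bar>"] k by simp
  finally show ?thesis by blast
qed

lemma matrix_slab_lmeasurable:
  fixes v :: "real^'m"
  assumes a: "0 < a" "a \<le> norm v" and R: "R \<ge> 0" and \<delta>: "\<delta> \<ge> 0"
  shows "(matrix_slab R v \<delta> :: (real^'m^'n) set) \<in> lmeasurable"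
    and "measure lebesgue (matrix_slab R v \<delta> :: (real^'m^'n) set)
           \<le> ((2*R)^(CARD('m)-1) * (2 * real CARD('m) * \<delta> / a))^CARD('n)"
proof -
  obtain k where k: "norm v \<le> real CARD('m) * \<bar>v$k\<bar>"
    using exists_norm_le_card_mult_abs_nth by blast
  with a have vk: "v$k \<noteq> 0" by auto
  let ?b = "((2*R)^(CARD('m)-1) * (2*\<delta>/\<bar>v$k\<bar>))^CARD('n)"
  have em: "emeasure lborel (matrix_slab R v \<delta> :: (real^'m^'n) set) \<le> ennreal ?b"
    by (rule emeasure_matrix_slab_le[OF vk R \<delta>])
  then show "(matrix_slab R v \<delta> :: (real^'m^'n) set) \<in> lmeasurable"
    using le_less_trans[OF em ennreal_less_top] by (intro fmeasurableI) auto
  have "measure lebesgue (matrix_slab R v \<delta> :: (real^'m^'n) set) \<le> ?b"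
    using em R \<delta> by (simp add: measure_def enn2real_leI)
  also have "\<dots> \<le> ((2*R)^(CARD('m)-1) * (2 * real CARD('m) * \<delta> / a))^CARD('n)"
  proof (intro power_mono mult_left_mono)
    show "2*\<delta>/\<bar>v$k\<bar> \<le> 2 * real CARD('m) * \<delta> / a"
      using k vk a \<delta> by (simp add: field_simps mult_left_mono)
  qed (use R \<delta> in auto)
  finally show "measure lebesgue (matrix_slab R v \<delta> :: (real^'m^'n) set)
           \<le> ((2*R)^(CARD('m)-1) * (2 * real CARD('m) * \<delta> / a))^CARD('n)" .
qed

lemma negligible_if_power_law_covers:
  fixes S :: "'a::euclidean_space set"
  assumes t: "t > 0"
    and covers: "\<And>e. e > 0 \<Longrightarrow>
      \<exists>\<rho> T. 0 < \<rho> \<and> \<rho> < e \<and> S \<subseteq> T \<and> T \<in> lmeasurable \<and> measure lebesgue T \<le> c * \<rho> powr t"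
  shows "negligible S"
proof (unfold negligible_outer_le, intro allI impI)
  fix e :: real assume e: "e > 0"
  define \<rho>0 where "\<rho>0 = (e / (\<bar>c\<bar> + 1)) powr (1/t)"
  have "\<rho>0 > 0" using e by (simp add: \<rho>0_def)
  then obtain \<rho> T where \<rho>: "0 < \<rho>" "\<rho> < \<rho>0" "S \<subseteq> T" "T \<in> lmeasurable"
      "measure lebesgue T \<le> c * \<rho> powr t"
    using covers by blast
  have "\<rho> powr t \<le> \<rho>0 powr t" using \<rho> t by (intro powr_mono2) auto
  also have "\<dots> = e / (\<bar>c\<bar> + 1)" using e t by (simp add: \<rho>0_def powr_powr)
  finally have \<rho>_t: "\<rho> powr t \<le> e / (\<bar>c\<bar> + 1)" .
  have "measure lebesgue T \<le> c * \<rho> powr t" by (fact \<rho>(5))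
  also have "\<dots> \<le> \<bar>c\<bar> * \<rho> powr t" by (intro mult_right_mono) auto
  also have "\<dots> \<le> \<bar>c\<bar> * (e / (\<bar>c\<bar> + 1))" using \<rho>_t by (intro mult_left_mono) auto
  also have "\<dots> \<le> e" using e by (simp add: field_simps)
  finally show "\<exists>T. S \<subseteq> T \<and> T \<in> lmeasurable \<and> measure lebesgue T \<le> e" using \<rho> by blast
qed

lemma abs_inner_le_of_bounded_entries:
  fixes a w :: "real^'m"
  assumes "\<And>j. \<bar>a$j\<bar> \<le> R"
  shows "\<bar>a \<bullet> w\<bar> \<le> real CARD('m) * R * norm w"
proof -
  have "\<bar>a \<bullet> w\<bar> \<le> norm a * norm w" by (rule Cauchy_Schwarz_ineq2)
  also have "\<dots> \<le> (\<Sum>j\<in>UNIV. \<bar>a$j\<bar>) * norm w" by (intro mult_right_mono norm_le_l1_cart) auto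
  also have "\<dots> \<le> real CARD('m) * R * norm w"
    using sum_bounded_above[of UNIV "\<lambda>j. \<bar>a$j\<bar>" R] assms by (intro mult_right_mono) auto
  finally show ?thesis .
qed

lemma far_collisions_subset_matrix_slabs:
  fixes W :: "(real^'m) set"
  assumes C: "finite C" "W \<subseteq> (\<Union>c\<in>C. ball c \<rho>)" and \<rho>: "\<rho> \<le> r/2" and R: "R \<ge> 0"
  shows "{A::real^'m^'n. (\<forall>i j. \<bar>A$i$j\<bar> \<le> R) \<and> (\<exists>u\<in>closure W. r \<le> dist u x \<and> A *v u = A *v x)}
           \<subseteq> (\<Union>c\<in>{c\<in>C. r/2 \<le> dist c x}. matrix_slab R (c - x) (real CARD('m) * R * \<rho>))"
proof safe
  fix A :: "real^'m^'n" and u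
  assume A: "\<forall>i j. \<bar>A$i$j\<bar> \<le> R" and u: "u \<in> closure W" "r \<le> dist u x" "A *v u = A *v x"
  have "closure W \<subseteq> (\<Union>c\<in>C. cball c \<rho>)"
  proof (rule closure_minimal)
    have "(\<Union>c\<in>C. ball c \<rho>) \<subseteq> (\<Union>c\<in>C. cball c \<rho>)" by (intro UN_mono) auto
    then show "W \<subseteq> (\<Union>c\<in>C. cball c \<rho>)" using C(2) by (rule order_trans[rotated])
    show "closed (\<Union>c\<in>C. cball c \<rho>)" using C(1) by (intro closed_UN) auto
  qed
  then obtain c where c: "c \<in> C" "dist c u \<le> \<rho>" using u(1) by auto
  have "r \<le> dist u c + dist c x" using u(2) dist_triangle[of u x c] by linarith
  then have "r/2 \<le> dist c x" using c(2) \<rho> by (simp add: dist_commute)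
  moreover have "A \<in> matrix_slab R (c - x) (real CARD('m) * R * \<rho>)"
    unfolding matrix_slab_def slab_def mem_Collect_eq
  proof (intro allI conjI)
    fix i
    have "A$i \<bullet> u = A$i \<bullet> x"
      using arg_cong[OF u(3), of "\<lambda>y. y$i"] by (simp add: matrix_vector_mult_def inner_vec_def)
    then have "A$i \<bullet> (c - x) = A$i \<bullet> (c - u)" by (simp add: inner_diff_right)
    also have "\<bar>\<dots>\<bar> \<le> real CARD('m) * R * norm (c - u)"
      using A by (intro abs_inner_le_of_bounded_entries) auto
    also have "\<dots> \<le> real CARD('m) * R * \<rho>"
      using c(2) R by (intro mult_left_mono) (auto simp: dist_norm)
    finally show "\<bar>A$i \<bullet> (c - x)\<bar> \<le> real CARD('m) * R * \<rho>" .
  qed (use A in auto)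
  ultimately show "A \<in> (\<Union>c\<in>{c\<in>C. r/2 \<le> dist c x}. matrix_slab R (c - x) (real CARD('m) * R * \<rho>))"
    using c(1) by blast
qed

text \<open>A cover of \<open>W\<close> by at most \<open>\<rho>^-s\<close> balls yields at most \<open>\<rho>^-s\<close> matrix slabs, each of
  measure \<open>O(\<rho>^n)\<close>.\<close>
lemma negligible_bounded_far_collisions:
  fixes W :: "(real^'m) set"
  assumes thin: "\<And>e. e > 0 \<Longrightarrow> \<exists>\<rho> C. 0 < \<rho> \<and> \<rho> < e \<and> finite C \<and>
        W \<subseteq> (\<Union>c\<in>C. ball c \<rho>) \<and> real (card C) \<le> \<rho> powr (-s)"
    and s: "s < real CARD('n)" and R: "R \<ge> 0" and r: "r > 0"
  shows "negligible {A::real^'m^'n. (\<forall>i j. \<bar>A$i$j\<bar> \<le> R) \<and>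
           (\<exists>u\<in>closure W. r \<le> dist u x \<and> A *v u = A *v x)}" (is "negligible ?S")
proof (rule negligible_if_power_law_covers)
  define m where "m = real CARD('m)"
  define \<kappa> where "\<kappa> = (2*R)^(CARD('m)-1) * (4 * m\<^sup>2 * R / r)"
  have \<kappa>: "\<kappa> \<ge> 0" using R r by (simp add: \<kappa>_def m_def)
  show "real CARD('n) - s > 0" using s by simp
  fix e :: real assume e: "e > 0"
  obtain \<rho> C where \<rho>: "0 < \<rho>" "\<rho> < min e (r/2)" "finite C" "W \<subseteq> (\<Union>c\<in>C. ball c \<rho>)"
      "real (card C) \<le> \<rho> powr (-s)"
    using thin[of "min e (r/2)"] e r by auto
  define C' where "C' = {c\<in>C. r/2 \<le> dist c x}"
  define T where "T = (\<Union>c\<in>C'. matrix_slab R (c - x) (m * R * \<rho>) :: (real^'m^'n) set)"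
  have C': "finite C'" "c \<in> C' \<Longrightarrow> r/2 \<le> norm (c - x)" for c
    using \<rho>(3) by (auto simp: C'_def dist_norm)
  have \<delta>: "m * R * \<rho> \<ge> 0" using R \<rho>(1) by (simp add: m_def)
  have "(2*R)^(CARD('m)-1) * (2 * m * (m * R * \<rho>) / (r/2)) = \<kappa> * \<rho>"
    by (simp add: \<kappa>_def power2_eq_square field_simps)
  then have slab: "measure lebesgue (matrix_slab R (c - x) (m * R * \<rho>) :: (real^'m^'n) set)
      \<le> (\<kappa> * \<rho>)^CARD('n)" if "c \<in> C'" for c
    using matrix_slab_lmeasurable(2)[of "r/2" "c - x" R "m * R * \<rho>", where 'n='n] C'(2)[OF that] r R \<delta>
    by (simp add: m_def)
  show "\<exists>\<rho> T. 0 < \<rho> \<and> \<rho> < e \<and> ?S \<subseteq> T \<and> T \<in> lmeasurable \<and>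
      measure lebesgue T \<le> \<kappa> ^ CARD('n) * \<rho> powr (real CARD('n) - s)"
  proof (intro exI conjI)
    show "?S \<subseteq> T"
      unfolding T_def C'_def m_def by (rule far_collisions_subset_matrix_slabs) (use \<rho> R in auto)
    show "T \<in> lmeasurable"
      unfolding T_def using C' R \<delta> r
      by (intro fmeasurable.finite_UN matrix_slab_lmeasurable[of "r/2"]) auto
    have "measure lebesgue T \<le>
        (\<Sum>c\<in>C'. measure lebesgue (matrix_slab R (c - x) (m * R * \<rho>) :: (real^'m^'n) set))"
      unfolding T_def using C' R \<delta> r
      by (intro measure_UNION_le fmeasurable.finite_UN matrix_slab_lmeasurable[of "r/2"]) auto
    also have "\<dots> \<le> real (card C') * (\<kappa> * \<rho>)^CARD('n)"
      using sum_mono[OF slab] by simp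
    also have "\<dots> \<le> \<rho> powr (-s) * (\<kappa> * \<rho>)^CARD('n)"
      using \<rho> \<kappa> card_mono[of C C'] by (intro mult_right_mono) (auto simp: C'_def)
    also have "\<dots> = \<kappa> ^ CARD('n) * \<rho> powr (real CARD('n) - s)"
      using \<rho>(1) by (simp add: power_mult_distrib powr_realpow[symmetric] powr_add[symmetric] algebra_simps)
    finally show "measure lebesgue T \<le> \<kappa> ^ CARD('n) * \<rho> powr (real CARD('n) - s)" .
  qed (use \<rho> in auto)
qed

lemma negligible_collisions:
  fixes W :: "(real^'m) set"
  assumes "lower_box_dim W < ereal (real CARD('n))"
  shows "negligible {A::real^'m^'n. \<exists>u\<in>closure W. u \<noteq> x \<and> A *v u = A *v x}"
proof -
  obtain s where s: "lower_box_dim W < ereal s" "s < real CARD('n)"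
    using ereal_dense2[OF assms] by auto
  define N where "N R r = {A::real^'m^'n. (\<forall>i j. \<bar>A$i$j\<bar> \<le> real R) \<and>
      (\<exists>u\<in>closure W. 1 / real (Suc r) \<le> dist u x \<and> A *v u = A *v x)}" for R r :: nat
  have "negligible (\<Union>R. \<Union>r. N R r)"
    unfolding N_def
    by (intro negligible_Union_nat negligible_bounded_far_collisions[of W s]
        small_cover_of_lower_box_dim_less s) auto
  moreover have "{A::real^'m^'n. \<exists>u\<in>closure W. u \<noteq> x \<and> A *v u = A *v x} \<subseteq> (\<Union>R. \<Union>r. N R r)"
  proof safe
    fix A :: "real^'m^'n" and u assume u: "u \<in> closure W" "u \<noteq> x" "A *v u = A *v x"
    obtain r where r: "inverse (real (Suc r)) < dist u x"
      using u(2) reals_Archimedean[of "dist u x"] by auto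
    have "\<bar>A$i$j\<bar> \<le> real (nat \<lceil>norm A\<rceil>)" for i j
    proof -
      have "\<bar>A$i$j\<bar> \<le> norm (A$i)" by (rule component_le_norm_cart)
      also have "\<dots> \<le> norm A" by (rule Finite_Cartesian_Product.norm_nth_le)
      finally show ?thesis by linarith
    qed
    with u r have "A \<in> N (nat \<lceil>norm A\<rceil>) r"
      unfolding N_def by (auto simp: inverse_eq_divide intro!: bexI[of _ u])
    then show "A \<in> (\<Union>R. \<Union>r. N R r)" by blast
  qed
  ultimately show ?thesis by (rule negligible_subset)
qed

lemma continuous_on_matrix_vector_mult [continuous_intros]:
  assumes "continuous_on S f" "continuous_on S g"
  shows "continuous_on S (\<lambda>p. (f p :: real^'m^'n) *v (g p :: real^'m))"
proof -
  have "continuous_on S (\<lambda>p. f p $ i $ j)" "continuous_on S (\<lambda>p. g p $ j)" for i j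
    using assms by (auto intro: bounded_linear.continuous_on[OF bounded_linear_vec_nth])
  then show ?thesis
    unfolding matrix_vector_mult_def by (intro continuous_on_vec_lambda continuous_on_sum continuous_on_mult)
qed

lemma tendsto_of_compact_unique_preimage:
  fixes f :: "'a::metric_space \<Rightarrow> 'b::metric_space"
  assumes K: "compact K" "continuous_on K f" and u: "(\<lambda>k. f (u k)) \<longlonglongrightarrow> y" "\<And>k. u k \<in> K"
    and unique: "\<And>w. w \<in> K \<Longrightarrow> f w = y \<Longrightarrow> w = z"
  shows "u \<longlonglongrightarrow> z"
proof (rule tendstoI)
  fix e :: real assume e: "e > 0"
  define C where "C = K \<inter> {w. e \<le> dist w z}"
  have "compact C"
    unfolding C_def using K(1) by (intro compact_Int_closed closed_Collect_le continuous_intros)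
  show "eventually (\<lambda>k. dist (u k) z < e) sequentially"
  proof (cases "C = {}")
    case True
    have "dist (u k) z < e" for k using u(2)[of k] True by (auto simp: C_def not_le)
    then show ?thesis by simp
  next
    case False
    have "continuous_on C (\<lambda>w. dist (f w) y)"
      unfolding C_def by (intro continuous_intros continuous_on_subset[OF K(2)]) auto
    then obtain w0 where w0: "w0 \<in> C" "\<And>w. w \<in> C \<Longrightarrow> dist (f w0) y \<le> dist (f w) y"
      using continuous_attains_inf[OF \<open>compact C\<close> False] by blast
    have "f w0 \<noteq> y" using unique[of w0] w0(1) e by (auto simp: C_def)
    then have "eventually (\<lambda>k. dist (f (u k)) y < dist (f w0) y) sequentially"
      using u(1) by (intro tendstoD) auto
    then show ?thesis
    proof (rule eventually_mono)
      fix k assume "dist (f (u k)) y < dist (f w0) y"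
      then have "u k \<notin> C" using w0(2) by force
      then show "dist (u k) z < e" using u(2) by (auto simp: C_def not_le)
    qed
  qed
qed

definition approximable :: "(nat \<Rightarrow> real^'m) \<Rightarrow> real^'m^'n \<Rightarrow> real^'n \<Rightarrow> bool" where
  "approximable e A y \<longleftrightarrow> (\<forall>k. \<exists>l. dist (A *v e l) y < 1 / real (Suc k))"

definition approx_point :: "(nat \<Rightarrow> real^'m) \<Rightarrow> real^'m^'n \<Rightarrow> real^'n \<Rightarrow> nat \<Rightarrow> real^'m" where
  "approx_point e A y k = e (LEAST l. dist (A *v e l) y < 1 / real (Suc k))"

text \<open>Only countably many
  \<open>LEAST\<close> and \<open>lim\<close> operations are involved, which makes the decoder Borel.\<close>
definition decoder :: "(nat \<Rightarrow> nat \<Rightarrow> real^'m) \<Rightarrow> (real^'m^'n) \<times> (real^'n) \<Rightarrow> real^'m" where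
  "decoder d = (\<lambda>(A, y). lim (approx_point (d (LEAST i. approximable (d i) A y)) A y))"

lemma dist_approx_point:
  assumes "approximable e A y"
  shows "dist (A *v approx_point e A y k) y < 1 / real (Suc k)"
proof -
  from assms obtain l where "dist (A *v e l) y < 1 / real (Suc k)"
    unfolding approximable_def by blast
  then show ?thesis unfolding approx_point_def by (rule LeastI)
qed

lemma decoder_borel_measurable:
  fixes d :: "nat \<Rightarrow> nat \<Rightarrow> real^'m"
  shows "(decoder d :: (real^'m^'n) \<times> (real^'n) \<Rightarrow> real^'m) \<in> borel_measurable borel"
proof -
  have dist_cont: "continuous_on UNIV (\<lambda>p::(real^'m^'n) \<times> (real^'n). dist (fst p *v w) (snd p))" for w
    by (intro continuous_intros)
  note dist_meas [measurable] = borel_measurable_continuous_onI[OF dist_cont]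
  have index: "(\<lambda>p::(real^'m^'n) \<times> (real^'n). LEAST i. approximable (d i) (fst p) (snd p))
      \<in> borel \<rightarrow>\<^sub>M count_space UNIV"
    unfolding approximable_def by (rule measurable_Least) measurable
  have "(\<lambda>p::(real^'m^'n) \<times> (real^'n). LEAST l. dist (fst p *v d i l) (snd p) < 1 / real (Suc k))
      \<in> borel \<rightarrow>\<^sub>M count_space UNIV" for i k
    by (rule measurable_Least) measurable
  then have "(\<lambda>p::(real^'m^'n) \<times> (real^'n). approx_point (d i) (fst p) (snd p) k) \<in> borel_measurable borel"
    for i k
    unfolding approx_point_def by (rule measurable_compose) simp
  then have "(\<lambda>p::(real^'m^'n) \<times> (real^'n).
      approx_point (d (LEAST i. approximable (d i) (fst p) (snd p))) (fst p) (snd p) k) \<in> borel_measurable borel"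
    for k
    by (rule measurable_compose_countable[OF _ index])
  then show ?thesis
    unfolding decoder_def split_beta by (rule borel_measurable_lim_metric)
qed

lemma decoder_eq:
  fixes A :: "real^'m^'n"
  assumes K: "\<And>i. compact (K i)" and d: "\<And>i. range (d i) \<subseteq> K i" "\<And>i. K i \<subseteq> closure (range (d i))"
    and z: "z \<in> K i0" and injective: "\<And>i u. u \<in> K i \<Longrightarrow> A *v u = A *v z \<Longrightarrow> u = z"
  shows "decoder d (A, A *v z) = z"
proof -
  define y where "y = A *v z"
  let ?i = "LEAST i. approximable (d i) A y"
  have "approximable (d i0) A y"
    unfolding approximable_def
  proof
    fix k
    have "y \<in> (*v) A ` closure (range (d i0))"
      using d(2) z unfolding y_def by (intro imageI) blast
    also have "\<dots> \<subseteq> closure ((*v) A ` range (d i0))"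
      by (rule image_closure_subset[OF matrix_vector_mult_linear_continuous_on closed_closure closure_subset])
    finally show "\<exists>l. dist (A *v d i0 l) y < 1 / real (Suc k)"
      unfolding closure_approachable by (auto simp: dist_commute)
  qed
  then have approx: "approximable (d ?i) A y"
    by (rule LeastI)
  have bound: "dist (A *v approx_point (d ?i) A y k) y \<le> inverse (real (Suc k))" for k
    using dist_approx_point[OF approx, of k] by (simp add: inverse_eq_divide)
  have "(\<lambda>k. dist (A *v approx_point (d ?i) A y k) y) \<longlonglongrightarrow> 0"
  proof (rule tendsto_sandwich[OF _ _ tendsto_const LIMSEQ_inverse_real_of_nat])
    show "\<forall>\<^sub>F k in sequentially. 0 \<le> dist (A *v approx_point (d ?i) A y k) y"
      by simp
    show "\<forall>\<^sub>F k in sequentially. dist (A *v approx_point (d ?i) A y k) y \<le> inverse (real (Suc k))"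
      by (intro always_eventually allI bound)
  qed
  then have "(\<lambda>k. A *v approx_point (d ?i) A y k) \<longlonglongrightarrow> y"
    by (rule tendsto_dist_iff[THEN iffD2])
  then have "approx_point (d ?i) A y \<longlonglongrightarrow> z"
    by (rule tendsto_of_compact_unique_preimage[where K="K ?i", OF K matrix_vector_mult_linear_continuous_on])
      (use d(1) in \<open>auto simp: approx_point_def y_def intro: injective\<close>)
  then show ?thesis
    unfolding decoder_def y_def by (simp add: limI)
qed

definition collision :: "(nat \<Rightarrow> (real^'m) set) \<Rightarrow> real^'m^'n \<Rightarrow> real^'m \<Rightarrow> bool" where
  "collision K A z \<longleftrightarrow> (\<exists>i. \<exists>u\<in>K i. u \<noteq> z \<and> A *v u = A *v z)"

lemma closed_far_collision_pairs:
  fixes K :: "(real^'m) set"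
  assumes "compact K"
  shows "closed {(z, A::real^'m^'n). \<exists>u\<in>K. r \<le> dist u z \<and> A *v u = A *v z}"
proof -
  have "closed {q :: (real^'m) \<times> (real^'m) \<times> (real^'m^'n).
      r \<le> dist (fst q) (fst (snd q)) \<and> snd (snd q) *v fst q = snd (snd q) *v fst (snd q)}"
    by (intro closed_Collect_conj closed_Collect_le closed_Collect_eq continuous_intros)
  from closed_compact_projection[OF assms this]
  have "closed {y :: (real^'m) \<times> (real^'m^'n). \<exists>u\<in>K. r \<le> dist u (fst y) \<and> snd y *v u = snd y *v fst y}"
    by (simp add: Bex_def)
  moreover have "{y :: (real^'m) \<times> (real^'m^'n). \<exists>u\<in>K. r \<le> dist u (fst y) \<and> snd y *v u = snd y *v fst y} =
      {(z, A::real^'m^'n). \<exists>u\<in>K. r \<le> dist u z \<and> A *v u = A *v z}"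
    by auto
  ultimately show ?thesis by simp
qed

lemma collision_pairs_borel:
  assumes "\<And>i. compact (K i)"
  shows "{(z, A::real^'m^'n). collision K A z} \<in> sets borel"
proof -
  have "collision K A z \<longleftrightarrow> (\<exists>i k. \<exists>u\<in>K i. 1 / real (Suc k) \<le> dist u z \<and> A *v u = A *v z)"
    for z and A :: "real^'m^'n"
  proof
    assume "collision K A z"
    then obtain i u where u: "u \<in> K i" "u \<noteq> z" "A *v u = A *v z"
      by (auto simp: collision_def)
    then obtain k where "inverse (real (Suc k)) < dist u z"
      using reals_Archimedean[of "dist u z"] by auto
    then have "1 / real (Suc k) \<le> dist u z" by (simp add: inverse_eq_divide)
    with u show "\<exists>i k. \<exists>u\<in>K i. 1 / real (Suc k) \<le> dist u z \<and> A *v u = A *v z"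
      by blast
  qed (force simp: collision_def)
  then have "{(z, A::real^'m^'n). collision K A z} =
      (\<Union>i k. {(z, A). \<exists>u\<in>K i. 1 / real (Suc k) \<le> dist u z \<and> A *v u = A *v z})"
    by auto
  also have "\<dots> \<in> sets borel"
    by (intro sets.countable_UN image_subsetI borel_closed closed_far_collision_pairs assms)
  finally show ?thesis .
qed

lemma AE_no_collision:
  fixes X :: "'w \<Rightarrow> real^'m"
  assumes "sigma_finite_measure M" "X \<in> borel_measurable M" "\<And>i. compact (K i)"
    and "\<And>z. negligible {A::real^'m^'n. collision K A z}"
  shows "AE A in lborel. AE \<omega> in M. \<not> collision K (A::real^'m^'n) (X \<omega>)"
proof -
  interpret pair_sigma_finite M "lborel :: (real^'m^'n) measure"
    using assms(1) by (intro pair_sigma_finite.intro sigma_finite_lborel)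
  have meas: "(\<lambda>p. (X (fst p), snd p)) \<in> M \<Otimes>\<^sub>M lborel \<rightarrow>\<^sub>M (borel :: ((real^'m) \<times> (real^'m^'n)) measure)"
    unfolding borel_prod[symmetric] using assms(2) by measurable
  have "(\<lambda>p. (X (fst p), snd p)) -` (- {(z, A::real^'m^'n). collision K A z}) \<inter> space (M \<Otimes>\<^sub>M lborel)
      \<in> sets (M \<Otimes>\<^sub>M lborel)"
    by (rule measurable_sets[OF meas]) (intro borel_comp collision_pairs_borel assms(3))
  also have "(\<lambda>p. (X (fst p), snd p)) -` (- {(z, A::real^'m^'n). collision K A z}) \<inter> space (M \<Otimes>\<^sub>M lborel) =
      {p \<in> space (M \<Otimes>\<^sub>M lborel). \<not> collision K (snd p) (X (fst p))}"
    by auto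
  finally have sets: "{p \<in> space (M \<Otimes>\<^sub>M (lborel :: (real^'m^'n) measure)). \<not> collision K (snd p) (X (fst p))}
      \<in> sets (M \<Otimes>\<^sub>M lborel)" .
  have "AE A in lborel. \<not> collision K (A::real^'m^'n) z" for z
  proof -
    have "{A::real^'m^'n. collision K A z} \<in> null_sets lebesgue"
      using assms(4) by (simp add: negligible_iff_null_sets)
    then show ?thesis
      by (subst AE_completion_iff[symmetric]) (auto intro: AE_I')
  qed
  then have "AE \<omega> in M. AE A in lborel. \<not> collision K (A::real^'m^'n) (X \<omega>)"
    by simp
  then show ?thesis
    using AE_commute[where P="\<lambda>\<omega> A. \<not> collision K A (X \<omega>)", OF sets] by simp
qed

lemma AE_imp_measure_not_0:
  assumes "AE x in M. P x"
  shows "measure M {x \<in> space M. \<not> P x} = 0"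
proof (cases "{x \<in> space M. \<not> P x} \<in> sets M")
  case True
  with assms show ?thesis by (simp add: AE_iff_measurable[OF True refl] measure_def)
qed (simp add: measure_notin_sets)

lemma dense_sequences_exist:
  fixes K :: "nat \<Rightarrow> 'a::{metric_space, second_countable_topology} set"
  assumes "\<And>i. K i \<noteq> {}"
  obtains d :: "nat \<Rightarrow> nat \<Rightarrow> 'a" where "\<And>i. range (d i) \<subseteq> K i" "\<And>i. K i \<subseteq> closure (range (d i))"
proof -
  have "\<exists>f::nat \<Rightarrow> 'a. range f \<subseteq> K i \<and> K i \<subseteq> closure (range f)" for i
  proof -
    obtain T where T: "countable T" "T \<subseteq> K i" "K i \<subseteq> closure T" by (rule separable)
    with assms have "T \<noteq> {}" by auto
    with T show ?thesis by (intro exI[of _ "from_nat_into T"]) (simp add: range_from_nat_into)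
  qed
  then show thesis using that by metis
qed

lemma negligible_collision:
  fixes W :: "nat \<Rightarrow> (real^'m) set"
  assumes "\<And>i. lower_box_dim (W i) < ereal (real CARD('n))"
  shows "negligible {A::real^'m^'n. collision (\<lambda>i. closure (W i)) A z}"
proof -
  have "{A::real^'m^'n. collision (\<lambda>i. closure (W i)) A z} =
      (\<Union>i. {A. \<exists>u\<in>closure (W i). u \<noteq> z \<and> A *v u = A *v z})"
    by (auto simp: collision_def)
  then show ?thesis
    using assms by (simp add: negligible_Union_nat negligible_collisions)
qed

lemma AE_decoder_eq:
  fixes A :: "real^'m^'n"
  assumes "\<And>i. compact (K i)" "\<And>i. range (d i) \<subseteq> K i" "\<And>i. K i \<subseteq> closure (range (d i))"
    and "AE \<omega> in M. X \<omega> \<in> (\<Union>i. K i)" "AE \<omega> in M. \<not> collision K A (X \<omega>)"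
  shows "AE \<omega> in M. decoder d (A, A *v X \<omega>) = X \<omega>"
  using assms(4,5)
proof eventually_elim
  case (elim \<omega>)
  then obtain i where "X \<omega> \<in> K i" by blast
  with elim show ?case by (intro decoder_eq[OF assms(1-3)]) (auto simp: collision_def)
qed

theorem theorem1:
  fixes M :: "'w measure" and X :: "'w \<Rightarrow> real ^ 'm"
  assumes "prob_space M"
    and "X \<in> borel_measurable M"
    and "CARD('n) \<le> CARD('m)"
    and "ereal (real CARD('n)) > description_complexity M X"
  shows "\<exists>g :: (real ^ 'm ^ 'n) \<times> (real ^ 'n) \<Rightarrow> real ^ 'm.
           g \<in> borel_measurable borel \<and>
           (AE A in lebesgue.
              measure M {\<omega> \<in> space M. g (A, A *v X \<omega>) \<noteq> X \<omega>} = 0)"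
proof -
  obtain W :: "nat \<Rightarrow> (real^'m) set" where W: "\<And>i. W i \<noteq> {}" "\<And>i. bounded (W i)"
      "\<And>i. lower_box_dim (W i) < ereal (real CARD('n))" and supp: "AE \<omega> in M. X \<omega> \<in> (\<Union>i. W i)"
    using description_complexity_lessE[OF assms(1)] assms(4) by blast
  define K where "K i = closure (W i)" for i
  have K: "compact (K i)" "K i \<noteq> {}" for i
    using W(1,2) by (simp_all add: K_def compact_closure)
  obtain d :: "nat \<Rightarrow> nat \<Rightarrow> real^'m"
    where d: "\<And>i. range (d i) \<subseteq> K i" "\<And>i. K i \<subseteq> closure (range (d i))"
    using dense_sequences_exist[of K, OF K(2)] by metis
  have "W i \<subseteq> K i" for i
    using closure_subset by (simp add: K_def)
  with supp have supp_K: "AE \<omega> in M. X \<omega> \<in> (\<Union>i. K i)"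
    by (elim eventually_mono) blast
  have "negligible {A::real^'m^'n. collision K A z}" for z
    unfolding K_def using W(3) by (rule negligible_collision)
  then have "AE A in lborel. AE \<omega> in M. \<not> collision K (A::real^'m^'n) (X \<omega>)"
    by (rule AE_no_collision[OF prob_space_imp_sigma_finite[OF assms(1)] assms(2) K(1)])
  then have "AE A in lborel. measure M {\<omega> \<in> space M. decoder d (A::real^'m^'n, A *v X \<omega>) \<noteq> X \<omega>} = 0"
    by (elim eventually_mono) (intro AE_imp_measure_not_0 AE_decoder_eq[OF K(1) d supp_K])
  then show ?thesis
    by (intro exI[of _ "decoder d"] conjI decoder_borel_measurable AE_completion)
qed

end
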